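(* Let $Z$ be a weakly efficient solution of the SDP relaxation described in the context, with first-row data $(z_+,z_-,\rho)$. If $\rho=0$, then $(z_+,z_-,0)$ is feasible and weakly efficient for the QCQP, and its QCQP objective value $F(z_+,z_-,0)=(G(z_+-z_-),0)$ equals the SDP objective value of $Z$.
   Context: Let $k,m,n\in\mathbb{N}$. Let $A_c,A_\delta\in\mathbb{R}^{m\times n}$ with $A_\delta\ge 0$ entrywise, $b_c,b_\delta\in\mathbb{R}^m$ with $b_\delta\ge0$, $G\in\mathbb{R}^{k\times n}$, and $\ell,u\in\mathbb{R}^n$ with $\ell\le u$. All vector inequalities are componentwise. QCQP: variables $x_+,x_-\in\mathbb{R}^n_{\ge0}$, $r\in[0,1]$, subject to $A_cx_+-A_cx_-+rA_\delta x_++rA_\delta x_-+rb_\delta-b_c\le0$ and $\ell\le x_+-x_-\le u$; vector objective $F(x_+,x_-,r)=(G(x_+-x_-),-r)\in\mathbb{R}^{k+1}$, minimized in the Pareto sense. SDP relaxation: variable a symmetric positive semidefinite matrix $Z$ of size $(2n+2)\times(2n+2)$ written in block form with row/column blocks of sizes $1,n,n,1$: $Z=\begin{pmatrix} Z_{00} & z_+^T & z_-^T & \rho\\ z_+ & * & * & w_+\\ z_- & * & * & w_-\\ \rho & w_+^T & w_-^T & \sigma\end{pmatrix}$, with $z_\pm,w_\pm\in\mathbb{R}^n$, $\rho,\sigma\in\mathbb{R}$. Constraints: $Z_{00}=1$; $A_cz_+-A_cz_-+A_\delta(w_++w_-)+\rho\, b_\delta-b_c\le0$; $\ell\le z_+-z_-\le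 u$; $z_+,z_-\ge0$, $\rho\ge0$, $w_+,w_-\ge0$; $\sigma\le1$. Vector objective $(G(z_+-z_-),-\rho)\in\mathbb{R}^{k+1}$, minimized in the Pareto sense. Efficiency (for minimizing a vector function $f$ over a feasible set $\mathcal{X}$): $x^*\in\mathcal{X}$ is efficient if there is no $x\in\mathcal{X}$ with $f(x)\le f(x^* )$ and $f(x)\ne f(x^* )$; weakly efficient if there is no $x\in\mathcal{X}$ with $f(x)<f(x^* )$ (all components strict). *)

theory Defs
  imports "HOL-Analysis.Analysis"
begin

definition weakly_efficient :: "('x \<Rightarrow> real^'d) \<Rightarrow> 'x set \<Rightarrow> 'x \<Rightarrow> bool" where
  "weakly_efficient f X xs \<longleftrightarrow> xs \<in> X \<and> \<not> (\<exists>x\<in>X. \<forall>i. f x $ i < f xs $ i)"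

definition efficient :: "('x \<Rightarrow> real^'d) \<Rightarrow> 'x set \<Rightarrow> 'x \<Rightarrow> bool" where
  "efficient f X xs \<longleftrightarrow> xs \<in> X \<and>
     \<not> (\<exists>x\<in>X. (\<forall>i. f x $ i \<le> f xs $ i) \<and> f x \<noteq> f xs)"

text \<open>QCQP. Variables (x_plus, x_minus, r). Objective in R^(k+1), indexed by 'k option:
  Some i is the i-th row of G(x_plus - x_minus), None is the last component -r.\<close>

definition qcqp_feasible ::
  "real^'n^'m \<Rightarrow> real^'n^'m \<Rightarrow> real^'m \<Rightarrow> real^'m \<Rightarrow> real^'n \<Rightarrow> real^'n
   \<Rightarrow> ((real^'n) \<times> (real^'n) \<times> real) set" where
  "qcqp_feasible Ac Ad bc bd l u = {(xp, xm, r).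
     (\<forall>i. 0 \<le> xp $ i) \<and> (\<forall>i. 0 \<le> xm $ i) \<and> 0 \<le> r \<and> r \<le> 1 \<and>
     (\<forall>j. (Ac *v xp - Ac *v xm + r *\<^sub>R (Ad *v xp) + r *\<^sub>R (Ad *v xm) + r *\<^sub>R bd - bc) $ j \<le> 0) \<and>
     (\<forall>i. l $ i \<le> (xp - xm) $ i \<and> (xp - xm) $ i \<le> u $ i)}"

definition qcqp_obj :: "real^'n^'k \<Rightarrow> (real^'n) \<times> (real^'n) \<times> real \<Rightarrow> real^('k option)" where
  "qcqp_obj G = (\<lambda>(xp, xm, r). \<chi> t. (case t of Some i \<Rightarrow> (G *v (xp - xm)) $ i | None \<Rightarrow> - r))"

text \<open>SDP relaxation. The (2n+2)x(2n+2) matrix Z is indexed by the type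
  unit + 'n + 'n + unit (= unit + ('n + ('n + unit))), giving the row/column blocks
  of sizes 1, n, n, 1.\<close>

type_synonym 'n sdpidx = "unit + 'n + 'n + unit"

abbreviation idx0 :: "'n sdpidx" where "idx0 \<equiv> Inl ()"
abbreviation idxP :: "'n \<Rightarrow> 'n sdpidx" where "idxP i \<equiv> Inr (Inl i)"
abbreviation idxM :: "'n \<Rightarrow> 'n sdpidx" where "idxM i \<equiv> Inr (Inr (Inl i))"
abbreviation idxL :: "'n sdpidx" where "idxL \<equiv> Inr (Inr (Inr ()))"

definition psd :: "real^'a^'a \<Rightarrow> bool" where
  "psd Z \<longleftrightarrow> transpose Z = Z \<and> (\<forall>v. 0 \<le> v \<bullet> (Z *v v))"

definition Z00 :: "real^('n::finite sdpidx)^('n sdpidx) \<Rightarrow> real" where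
  "Z00 Z = Z $ idx0 $ idx0"
definition zp :: "real^('n::finite sdpidx)^('n sdpidx) \<Rightarrow> real^'n" where
  "zp Z = (\<chi> i. Z $ idx0 $ idxP i)"
definition zm :: "real^('n::finite sdpidx)^('n sdpidx) \<Rightarrow> real^'n" where
  "zm Z = (\<chi> i. Z $ idx0 $ idxM i)"
definition rho :: "real^('n::finite sdpidx)^('n sdpidx) \<Rightarrow> real" where
  "rho Z = Z $ idx0 $ idxL"
definition wp :: "real^('n::finite sdpidx)^('n sdpidx) \<Rightarrow> real^'n" where
  "wp Z = (\<chi> i. Z $ idxP i $ idxL)"
definition wm :: "real^('n::finite sdpidx)^('n sdpidx) \<Rightarrow> real^'n" where
  "wm Z = (\<chi> i. Z $ idxM i $ idxL)"
definition sigma :: "real^('n::finite sdpidx)^('n sdpidx) \<Rightarrow> real" where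
  "sigma Z = Z $ idxL $ idxL"

definition sdp_feasible ::
  "real^'n^'m \<Rightarrow> real^'n^'m \<Rightarrow> real^'m \<Rightarrow> real^'m \<Rightarrow> real^'n \<Rightarrow> real^'n
   \<Rightarrow> (real^('n::finite sdpidx)^('n sdpidx)) set" where
  "sdp_feasible Ac Ad bc bd l u = {Z. psd Z \<and> Z00 Z = 1 \<and>
     (\<forall>j. (Ac *v zp Z - Ac *v zm Z + Ad *v (wp Z + wm Z) + rho Z *\<^sub>R bd - bc) $ j \<le> 0) \<and>
     (\<forall>i. l $ i \<le> (zp Z - zm Z) $ i \<and> (zp Z - zm Z) $ i \<le> u $ i) \<and>
     (\<forall>i. 0 \<le> zp Z $ i) \<and> (\<forall>i. 0 \<le> zm Z $ i) \<and> 0 \<le> rho Z \<and>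
     (\<forall>i. 0 \<le> wp Z $ i) \<and> (\<forall>i. 0 \<le> wm Z $ i) \<and> sigma Z \<le> 1}"

definition sdp_obj :: "real^'n^'k \<Rightarrow> real^('n::finite sdpidx)^('n sdpidx) \<Rightarrow> real^('k option)" where
  "sdp_obj G Z = (\<chi> t. (case t of Some i \<Rightarrow> (G *v (zp Z - zm Z)) $ i | None \<Rightarrow> - rho Z))"

end

theory Submission
  imports Defs
begin

text \<open>The SDP is a relaxation of the QCQP: a QCQP-feasible point \<open>(x\<^sub>+, x\<^sub>-, r)\<close> lifts to the
  rank-one matrix \<open>v v\<^sup>T\<close> with \<open>v = (1, x\<^sub>+, x\<^sub>-, r)\<close>, which is SDP-feasible with the same
  objective value. Conversely, if \<open>\<rho> = 0\<close>, dropping the nonnegative term \<open>A\<^sub>\<delta>(w\<^sub>+ + w\<^sub>-)\<close>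
  shows that the first row \<open>(z\<^sub>+, z\<^sub>-, 0)\<close> of \<open>Z\<close> is QCQP-feasible, again with the same objective.
  A QCQP point strictly dominating it would therefore lift to an SDP point strictly dominating
  \<open>Z\<close>.\<close>

lemma weakly_efficient_of_image_subset:
  assumes "weakly_efficient g Y y" "x \<in> X" "f x = g y" "f ` X \<subseteq> g ` Y"
  shows "weakly_efficient f X x"
  unfolding weakly_efficient_def
proof (intro conjI notI)
  show "x \<in> X"
    by (fact assms(2))
next
  assume "\<exists>x'\<in>X. \<forall>i. f x' $ i < f x $ i"
  then obtain x' where "x' \<in> X" "\<forall>i. f x' $ i < f x $ i"
    by blast
  moreover from \<open>x' \<in> X\<close> assms(4) obtain y' where "y' \<in> Y" "g y' = f x'"
    by (metis imageE subsetD imageI)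
  ultimately show False
    using assms(1,3) by (auto simp: weakly_efficient_def)
qed

definition outer :: "real^'a \<Rightarrow> real^'a^'a" where
  "outer v = (\<chi> a b. v $ a * v $ b)"

lemma psd_outer: "psd (outer v)"
proof -
  have "transpose (outer v) = outer v"
    by (simp add: transpose_def outer_def vec_eq_iff mult.commute)
  moreover have "outer v *v w = (v \<bullet> w) *\<^sub>R v" for w
    by (simp add: matrix_vector_mult_def outer_def vec_eq_iff inner_vec_def
        sum_distrib_left mult.commute mult.left_commute)
  then have "0 \<le> w \<bullet> (outer v *v w)" for w
    by (simp add: inner_commute)
  ultimately show ?thesis
    by (simp add: psd_def)
qed

definition sdp_lift :: "real^'n \<Rightarrow> real^'n \<Rightarrow> real \<Rightarrow> real^('n::finite sdpidx)^('n sdpidx)" where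
  "sdp_lift xp xm r = outer (\<chi> t. case t of Inl _ \<Rightarrow> 1 | Inr (Inl i) \<Rightarrow> xp $ i
      | Inr (Inr (Inl i)) \<Rightarrow> xm $ i | Inr (Inr (Inr _)) \<Rightarrow> r)"

lemma sdp_lift_simps:
  "Z00 (sdp_lift xp xm r) = 1" "zp (sdp_lift xp xm r) = xp" "zm (sdp_lift xp xm r) = xm"
  "rho (sdp_lift xp xm r) = r" "wp (sdp_lift xp xm r) = r *\<^sub>R xp"
  "wm (sdp_lift xp xm r) = r *\<^sub>R xm" "sigma (sdp_lift xp xm r) = r * r"
  by (simp_all add: Z00_def zp_def zm_def rho_def wp_def wm_def sigma_def sdp_lift_def outer_def
      vec_eq_iff mult.commute)

lemma sdp_lift_in_sdp_feasible:
  assumes "(xp, xm, r) \<in> qcqp_feasible Ac Ad bc bd l u"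
  shows "sdp_lift xp xm r \<in> sdp_feasible Ac Ad bc bd l u"
proof -
  have "psd (sdp_lift xp xm r)"
    unfolding sdp_lift_def by (rule psd_outer)
  with assms show ?thesis
    by (simp add: sdp_feasible_def qcqp_feasible_def sdp_lift_simps
        matrix_vector_right_distrib matrix_vector_mult_scaleR algebra_simps mult_le_one)
qed

lemma sdp_obj_sdp_lift: "sdp_obj G (sdp_lift xp xm r) = qcqp_obj G (xp, xm, r)"
  by (simp add: sdp_obj_def qcqp_obj_def sdp_lift_simps vec_eq_iff split: option.split)

lemma qcqp_obj_image_subset_sdp_obj_image:
  "qcqp_obj G ` qcqp_feasible Ac Ad bc bd l u \<subseteq> sdp_obj G ` sdp_feasible Ac Ad bc bd l u"
proof
  fix v
  assume "v \<in> qcqp_obj G ` qcqp_feasible Ac Ad bc bd l u"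
  then obtain xp xm r where "(xp, xm, r) \<in> qcqp_feasible Ac Ad bc bd l u"
    and "v = sdp_obj G (sdp_lift xp xm r)"
    by (auto simp: sdp_obj_sdp_lift)
  then show "v \<in> sdp_obj G ` sdp_feasible Ac Ad bc bd l u"
    using sdp_lift_in_sdp_feasible by blast
qed

lemma qcqp_obj_first_row: "qcqp_obj G (zp Z, zm Z, rho Z) = sdp_obj G Z"
  by (simp add: qcqp_obj_def sdp_obj_def vec_eq_iff split: option.split)

lemma first_row_in_qcqp_feasible:
  assumes Z: "Z \<in> sdp_feasible Ac Ad bc bd l u"
    and Ad_nonneg: "\<forall>j i. 0 \<le> Ad $ j $ i" and rho0: "rho Z = 0"
  shows "(zp Z, zm Z, 0) \<in> qcqp_feasible Ac Ad bc bd l u"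
proof -
  have "0 \<le> (Ad *v (wp Z + wm Z)) $ j" for j
    using Z Ad_nonneg by (auto simp: sdp_feasible_def matrix_vector_mult_def intro!: sum_nonneg)
  moreover have "(Ac *v zp Z - Ac *v zm Z + Ad *v (wp Z + wm Z) - bc) $ j \<le> 0" for j
    using Z rho0 by (simp add: sdp_feasible_def)
  ultimately have "(Ac *v zp Z - Ac *v zm Z - bc) $ j \<le> 0" for j
    by (smt (verit) vector_add_component vector_minus_component)
  then show ?thesis
    using Z by (simp add: qcqp_feasible_def sdp_feasible_def)
qed

theorem mainTheorem3:
  fixes Ac Ad :: "real^'n::finite^'m::finite"
    and bc bd :: "real^'m"
    and G :: "real^'n^'k::finite"
    and l u :: "real^'n"
    and Z :: "real^('n sdpidx)^('n sdpidx)"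
  assumes Ad_nonneg: "\<forall>j i. 0 \<le> Ad $ j $ i"
    and bd_nonneg: "\<forall>j. 0 \<le> bd $ j"
    and l_le_u: "\<forall>i. l $ i \<le> u $ i"
    and Z_weff: "weakly_efficient (sdp_obj G) (sdp_feasible Ac Ad bc bd l u) Z"
    and rho0: "rho Z = 0"
  shows "(zp Z, zm Z, 0) \<in> qcqp_feasible Ac Ad bc bd l u
    \<and> weakly_efficient (qcqp_obj G) (qcqp_feasible Ac Ad bc bd l u) (zp Z, zm Z, 0)
    \<and> qcqp_obj G (zp Z, zm Z, 0) = sdp_obj G Z"
proof -
  have "Z \<in> sdp_feasible Ac Ad bc bd l u"
    using Z_weff by (simp add: weakly_efficient_def)
  then have feasible: "(zp Z, zm Z, 0) \<in> qcqp_feasible Ac Ad bc bd l u"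
    using Ad_nonneg rho0 by (rule first_row_in_qcqp_feasible)
  have same_value: "qcqp_obj G (zp Z, zm Z, 0) = sdp_obj G Z"
    using qcqp_obj_first_row[of G Z] rho0 by simp
  have "weakly_efficient (qcqp_obj G) (qcqp_feasible Ac Ad bc bd l u) (zp Z, zm Z, 0)"
    using Z_weff feasible same_value qcqp_obj_image_subset_sdp_obj_image
    by (rule weakly_efficient_of_image_subset)
  with feasible same_value show ?thesis
    by blast
qed

end
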